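(* Let $(X,d)$ be a complete metric space and $T\colon X\to X$ a mapping for which there exists $k<\kappa(X)$ with $$d(T^nx,T^ny)\le k\,D(x,o(y))$$ for all $n\in\mathbb N$ and all $(x,y)\in X\times X$ with $D(x,o(y))\le D(x,o(x))$. If some orbit of $T$ is bounded, then $T$ has a fixed point.
   Context: The orbit of $x$ under $T$ is $o(x)=\{x\}\cup\{T^nx:n\in\mathbb N\}$; for nonempty $C\subseteq X$, $D(x,C)=\sup\{d(x,y):y\in C\}$. $B(x,r)$ denotes the closed ball. For $c\ge1$, balls in $X$ are $c$-regular if for every $k'<c$ there are $\mu,\alpha\in(0,1)$ such that for all $x,y\in X$ and $r>0$ with $d(x,y)\ge(1-\mu)r$ there exists $z\in X$ with $B(x,(1+\mu)r)\cap B(y,k'(1+\mu)r)\subseteq B(z,\alpha r)$. The Lifschitz characteristic is $\kappa(X)=\sup\{c\ge1:\text{balls in }X\text{ are }c\text{-regular}\}$. *)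

theory Defs
  imports "HOL-Analysis.Analysis" "HOL-Library.Extended_Real"
begin

definition orbit :: "('a \<Rightarrow> 'a) \<Rightarrow> 'a \<Rightarrow> 'a set" where
  "orbit T x = {x} \<union> {(T ^^ n) x | n. n \<ge> 1}"

definition Dsup :: "'a::metric_space \<Rightarrow> 'a set \<Rightarrow> ereal" where
  "Dsup x C = Sup ((\<lambda>y. ereal (dist x y)) ` C)"

definition balls_regular :: "real \<Rightarrow> 'a::metric_space itself \<Rightarrow> bool" where
  "balls_regular c (_::'a itself) \<longleftrightarrow>
     (\<forall>k'. k' < c \<longrightarrow>
        (\<exists>\<mu> \<alpha>. 0 < \<mu> \<and> \<mu> < 1 \<and> 0 < \<alpha> \<and> \<alpha> < 1 \<and>
          (\<forall>(x::'a) y r. r > 0 \<and> dist x y \<ge> (1 - \<mu>) * r \<longrightarrow>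
             (\<exists>z. cball x ((1 + \<mu>) * r) \<inter> cball y (k' * (1 + \<mu>) * r) \<subseteq> cball z (\<alpha> * r)))))"

definition lifschitz_char :: "'a::metric_space itself \<Rightarrow> ereal" where
  "lifschitz_char t = Sup (ereal ` {c. c \<ge> 1 \<and> balls_regular c t})"

end

theory Submission
  imports Defs
begin

(*
  Let r(x) be the asymptotic radius of the orbit (T^i x), i.e. the infimum of the s such that
  some centre eventually lies within s of T^i x. If the orbit of x stays within R of x, then
  (1 + mu) r(x) <= R: otherwise a displacement d(x, T^m x) >= (1 - mu) r(x) would, by the
  hypothesis on T, put the tail of the orbit into B(x, (1 + mu) r) and B(T^m x, k (1 + mu) r),
  and regularity of balls covers this intersection by a ball of radius alpha r < r.
  The same argument at an approximate asymptotic centre z shows that the orbit of z stays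
  within rate * R of z, with rate = (2 + mu) / (2 + 2 mu) < 1, and d(x, z) <= 2 R. Iterating
  yields a Cauchy sequence whose displacements tend to 0, and its limit is a fixed point.
*)

lemma funpow_funpow: "(f ^^ m) ((f ^^ n) x) = (f ^^ (m + n)) x"
  by (simp add: funpow_add)

lemma orbit_eq_range: "orbit T x = range (\<lambda>n. (T ^^ n) x)"
proof -
  have "insert 0 {1::nat..} = UNIV" by auto
  then have "range (\<lambda>n. (T ^^ n) x) = (\<lambda>n. (T ^^ n) x) ` insert 0 {1..}" by simp
  also have "\<dots> = insert x ((\<lambda>n. (T ^^ n) x) ` {1..})" by simp
  also have "(\<lambda>n. (T ^^ n) x) ` {1..} = {(T ^^ n) x | n. n \<ge> 1}" by auto
  finally show ?thesis unfolding orbit_def by simp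
qed

lemma orbit_funpow_subset: "orbit T ((T ^^ p) x) \<subseteq> orbit T x"
proof
  fix z assume "z \<in> orbit T ((T ^^ p) x)"
  then obtain n where "z = (T ^^ (n + p)) x" by (auto simp: orbit_eq_range funpow_funpow)
  then show "z \<in> orbit T x" by (simp add: orbit_eq_range)
qed

lemma Dsup_orbit_le_iff: "Dsup x (orbit T y) \<le> ereal s \<longleftrightarrow> (\<forall>j. dist x ((T ^^ j) y) \<le> s)"
  unfolding Dsup_def orbit_eq_range by (auto simp: SUP_le_iff)

lemma dist_le_Dsup: "y \<in> C \<Longrightarrow> ereal (dist x y) \<le> Dsup x C"
  unfolding Dsup_def by (rule SUP_upper)

lemma Dsup_mono: "C \<subseteq> C' \<Longrightarrow> Dsup x C \<le> Dsup x C'"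
  unfolding Dsup_def by (rule SUP_subset_mono) auto

lemma Dsup_orbit_nonneg: "0 \<le> Dsup x (orbit T y)"
proof -
  have "ereal (dist x y) \<le> Dsup x (orbit T y)" by (rule dist_le_Dsup) (simp add: orbit_def)
  then show ?thesis by (rule order_trans[rotated]) simp
qed

lemma bounded_orbit_imp_displacement_le:
  assumes "bounded (orbit T x)"
  obtains R where "0 < R" "\<And>n. dist x ((T ^^ n) x) \<le> R"
proof -
  obtain e where "\<forall>y\<in>orbit T x. dist x y \<le> e"
    using assms bounded_any_center by blast
  then have "dist x ((T ^^ n) x) \<le> max e 1" for n by (simp add: orbit_eq_range le_max_iff_disj)
  then show ?thesis using that[of "max e 1"] by simp
qed

lemma less_lifschitz_charE:
  assumes "ereal k < lifschitz_char TYPE('a::metric_space)"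
  obtains c where "1 \<le> c" "k < c" "balls_regular c TYPE('a)"
  using assms unfolding lifschitz_char_def less_Sup_iff by auto

lemma balls_regularE:
  assumes "balls_regular c TYPE('a::metric_space)" "k < c"
  obtains \<mu> \<alpha> where "0 < \<mu>" "\<mu> < 1" "0 < \<alpha>" "\<alpha> < 1"
    "\<And>(x::'a) y r. 0 < r \<Longrightarrow> (1 - \<mu>) * r \<le> dist x y \<Longrightarrow>
      \<exists>w. cball x ((1 + \<mu>) * r) \<inter> cball y (k * (1 + \<mu>) * r) \<subseteq> cball w (\<alpha> * r)"
proof -
  from assms have "\<exists>\<mu> \<alpha>. 0 < \<mu> \<and> \<mu> < 1 \<and> 0 < \<alpha> \<and> \<alpha> < 1 \<and>
      (\<forall>(x::'a) y r. r > 0 \<and> dist x y \<ge> (1 - \<mu>) * r \<longrightarrow>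
        (\<exists>w. cball x ((1 + \<mu>) * r) \<inter> cball y (k * (1 + \<mu>) * r) \<subseteq> cball w (\<alpha> * r)))"
    unfolding balls_regular_def by simp
  then show ?thesis using that by auto
qed

lemma dist_Suc_le_geometric_imp_Cauchy:
  fixes f :: "nat \<Rightarrow> 'a::metric_space"
  assumes q: "0 \<le> q" "q < 1" and step: "\<And>n. dist (f n) (f (Suc n)) \<le> C * q ^ n"
  shows "Cauchy f"
proof (unfold Cauchy_altdef2, intro allI impI)
  fix e :: real assume "0 < e"
  have tail: "dist (f m) (f (m + d)) \<le> C * (q ^ m - q ^ (m + d)) / (1 - q)" for m d
  proof (induction d)
    case (Suc d)
    have "dist (f m) (f (m + Suc d)) \<le> dist (f m) (f (m + d)) + dist (f (m + d)) (f (Suc (m + d)))"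
      by (simp add: dist_triangle)
    also have "\<dots> \<le> C * (q ^ m - q ^ (m + d)) / (1 - q) + C * q ^ (m + d)"
      using Suc step by (rule add_mono)
    also have "\<dots> = C * (q ^ m - q ^ (m + Suc d)) / (1 - q)"
      using q by (simp add: field_simps)
    finally show ?case .
  qed simp
  have "C \<ge> 0" using order_trans[OF zero_le_dist step[of 0]] by simp
  have "(\<lambda>m. C * q ^ m / (1 - q)) \<longlonglongrightarrow> C * 0 / (1 - q)"
    using q by (intro tendsto_intros LIMSEQ_power_zero) auto
  then have "\<forall>\<^sub>F m in sequentially. C * q ^ m / (1 - q) < e"
    using \<open>0 < e\<close> by (intro order_tendstoD(2)) simp_all
  then obtain N where N: "C * q ^ N / (1 - q) < e"
    by (auto simp: eventually_sequentially)
  show "\<exists>N. \<forall>n\<ge>N. dist (f n) (f N) < e"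
  proof (intro exI allI impI)
    fix n assume "N \<le> n"
    then obtain d where "n = N + d" using le_Suc_ex by blast
    then have "dist (f n) (f N) \<le> C * (q ^ N - q ^ (N + d)) / (1 - q)"
      using tail[of N d] by (simp add: dist_commute)
    also have "\<dots> \<le> C * q ^ N / (1 - q)"
      using q \<open>C \<ge> 0\<close> by (intro divide_right_mono mult_left_mono) auto
    finally show "dist (f n) (f N) < e" using N by simp
  qed
qed

lemma convergent_by_geometric_improvement:
  fixes P :: "'a::complete_space \<Rightarrow> real \<Rightarrow> bool"
  assumes q: "0 < q" "q < 1" and "0 < R0" "P x0 R0"
    and improve: "\<And>x R. 0 < R \<Longrightarrow> P x R \<Longrightarrow> \<exists>z. P z (q * R) \<and> dist x z \<le> C * R"
  shows "\<exists>xs. (\<forall>i. P (xs i) (q ^ i * R0)) \<and> convergent xs"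
proof -
  have "\<exists>xs. \<forall>i. P (xs i) (q ^ i * R0) \<and> dist (xs i) (xs (Suc i)) \<le> (C * R0) * q ^ i"
  proof (rule dependent_nat_choice)
    fix x i assume "P x (q ^ i * R0)"
    moreover have "0 < q ^ i * R0" using q \<open>0 < R0\<close> by simp
    ultimately obtain z where "P z (q * (q ^ i * R0))" "dist x z \<le> C * (q ^ i * R0)"
      using improve by blast
    then show "\<exists>z. P z (q ^ Suc i * R0) \<and> dist x z \<le> (C * R0) * q ^ i"
      by (intro exI[of _ z]) (simp add: mult_ac)
  qed (use \<open>P x0 R0\<close> in force)
  then obtain xs where xs: "\<And>i. P (xs i) (q ^ i * R0)"
    and "\<And>i. dist (xs i) (xs (Suc i)) \<le> (C * R0) * q ^ i"
    by blast
  then have "Cauchy xs" using q by (intro dist_Suc_le_geometric_imp_Cauchy) auto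
  then show ?thesis using xs Cauchy_convergent by blast
qed

definition asymptotic_radius :: "(nat \<Rightarrow> 'a::metric_space) \<Rightarrow> real" where
  "asymptotic_radius u = Inf {s. \<exists>y. \<forall>\<^sub>F i in sequentially. dist y (u i) \<le> s}"

lemma eventually_dist_le_imp_nonneg:
  assumes "\<forall>\<^sub>F i in sequentially. dist y (u i) \<le> s"
  shows "0 \<le> s"
proof -
  obtain N where "\<forall>i\<ge>N. dist y (u i) \<le> s" using assms unfolding eventually_sequentially ..
  then have "dist y (u N) \<le> s" by simp
  then show ?thesis using zero_le_dist[of y "u N"] by linarith
qed

lemma asymptotic_radius_le:
  assumes "\<forall>\<^sub>F i in sequentially. dist y (u i) \<le> s"
  shows "asymptotic_radius u \<le> s"
proof -
  let ?S = "{s. \<exists>y. \<forall>\<^sub>F i in sequentially. dist y (u i) \<le> s}"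
  have "bdd_below ?S" by (rule bdd_belowI[of _ 0]) (auto intro: eventually_dist_le_imp_nonneg)
  moreover have "s \<in> ?S" using assms by auto
  ultimately show ?thesis unfolding asymptotic_radius_def by (simp add: cInf_lower)
qed

lemma asymptotic_radius_less_imp_eventually_dist_le:
  assumes "bounded (range u)" "asymptotic_radius u < b"
  shows "\<exists>y. \<forall>\<^sub>F i in sequentially. dist y (u i) \<le> b"
proof -
  let ?S = "{s. \<exists>y. \<forall>\<^sub>F i in sequentially. dist y (u i) \<le> s}"
  obtain e where "\<forall>i. dist (u 0) (u i) \<le> e"
    using assms(1) bounded_any_center[of _ "u 0"] by auto
  then have "e \<in> ?S" by (auto intro!: always_eventually)
  then obtain s where "s \<in> ?S" "s < b"
    using cInf_lessD[of ?S b] assms(2) unfolding asymptotic_radius_def by auto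
  then obtain y where "\<forall>\<^sub>F i in sequentially. dist y (u i) \<le> s" by auto
  then have "\<forall>\<^sub>F i in sequentially. dist y (u i) \<le> b"
    by (rule eventually_mono) (use \<open>s < b\<close> in linarith)
  then show ?thesis ..
qed

locale lifschitz_regular_map =
  fixes T :: "'a::metric_space \<Rightarrow> 'a" and k \<mu> \<alpha> :: real
  assumes k_nonneg: "0 \<le> k" and \<mu>: "0 < \<mu>" "\<mu> < 1" and \<alpha>: "0 < \<alpha>" "\<alpha> < 1"
    and balls_regular: "\<And>(x::'a) y r. 0 < r \<Longrightarrow> (1 - \<mu>) * r \<le> dist x y \<Longrightarrow>
      \<exists>w. cball x ((1 + \<mu>) * r) \<inter> cball y (k * (1 + \<mu>) * r) \<subseteq> cball w (\<alpha> * r)"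
    and dist_funpow_le_Dsup: "\<And>n x y. 1 \<le> n \<Longrightarrow> Dsup x (orbit T y) \<le> Dsup x (orbit T x) \<Longrightarrow>
      ereal (dist ((T ^^ n) x) ((T ^^ n) y)) \<le> ereal k * Dsup x (orbit T y)"
begin

lemma dist_funpow_le:
  assumes "1 \<le> n" "Dsup x (orbit T y) \<le> Dsup x (orbit T x)" "\<forall>j. dist x ((T ^^ j) y) \<le> s"
  shows "dist ((T ^^ n) x) ((T ^^ n) y) \<le> k * s"
proof -
  have "ereal (dist ((T ^^ n) x) ((T ^^ n) y)) \<le> ereal k * Dsup x (orbit T y)"
    using dist_funpow_le_Dsup[OF assms(1,2)] .
  also have "\<dots> \<le> ereal k * ereal s"
    using assms(3) k_nonneg by (intro ereal_mult_left_mono) (simp_all add: Dsup_orbit_le_iff)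
  finally show ?thesis by simp
qed

lemma dist_funpow_le_of_le_displacement:
  assumes "1 \<le> n" "\<forall>j. dist x ((T ^^ j) y) \<le> s" "s \<le> dist x ((T ^^ m) x)"
  shows "dist ((T ^^ n) x) ((T ^^ n) y) \<le> k * s"
proof (rule dist_funpow_le[OF assms(1) _ assms(2)])
  have "Dsup x (orbit T y) \<le> ereal (dist x ((T ^^ m) x))"
    unfolding Dsup_orbit_le_iff using assms(2,3) by (auto intro: order_trans)
  also have "\<dots> \<le> Dsup x (orbit T x)" by (rule dist_le_Dsup) (auto simp: orbit_eq_range)
  finally show "Dsup x (orbit T y) \<le> Dsup x (orbit T x)" .
qed

lemma dist_funpow_funpow_le:
  assumes "1 \<le> n" "\<forall>j. dist x ((T ^^ j) x) \<le> s"
  shows "dist ((T ^^ n) x) ((T ^^ n) ((T ^^ p) x)) \<le> k * s"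
proof (rule dist_funpow_le[OF assms(1)])
  show "Dsup x (orbit T ((T ^^ p) x)) \<le> Dsup x (orbit T x)"
    by (rule Dsup_mono[OF orbit_funpow_subset])
  show "\<forall>j. dist x ((T ^^ j) ((T ^^ p) x)) \<le> s"
    using assms(2) by (simp add: funpow_funpow)
qed

lemma asymptotic_radius_le_regular:
  fixes c c' :: 'a and u :: "nat \<Rightarrow> 'a"
  assumes "0 < r" "(1 - \<mu>) * r \<le> dist c c'"
    and "\<forall>\<^sub>F i in sequentially. dist c (u i) \<le> (1 + \<mu>) * r"
    and "\<forall>\<^sub>F i in sequentially. dist c' (u i) \<le> k * (1 + \<mu>) * r"
  shows "asymptotic_radius u \<le> \<alpha> * r"
proof -
  from balls_regular[OF assms(1,2)] obtain w
    where w: "cball c ((1 + \<mu>) * r) \<inter> cball c' (k * (1 + \<mu>) * r) \<subseteq> cball w (\<alpha> * r)" ..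
  have "\<forall>\<^sub>F i in sequentially. dist w (u i) \<le> \<alpha> * r"
    using eventually_conj[OF assms(3,4)]
  proof (rule eventually_mono)
    fix i assume "dist c (u i) \<le> (1 + \<mu>) * r \<and> dist c' (u i) \<le> k * (1 + \<mu>) * r"
    then have "u i \<in> cball c ((1 + \<mu>) * r) \<inter> cball c' (k * (1 + \<mu>) * r)" by simp
    with w have "u i \<in> cball w (\<alpha> * r)" by (rule subsetD)
    then show "dist w (u i) \<le> \<alpha> * r" by simp
  qed
  then show ?thesis by (rule asymptotic_radius_le)
qed

lemma displacement_less_asymptotic_radius:
  fixes x c :: 'a
  defines "r \<equiv> asymptotic_radius (\<lambda>i. (T ^^ i) x)"
  assumes "0 < r" and s: "s \<le> (1 + \<mu>) * r"
    and near: "\<forall>\<^sub>F i in sequentially. dist c ((T ^^ i) x) \<le> s"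
    and shadow: "\<And>m. 1 \<le> m \<Longrightarrow>
      \<forall>\<^sub>F j in sequentially. dist ((T ^^ m) c) ((T ^^ m) ((T ^^ j) x)) \<le> k * s"
  shows "dist c ((T ^^ m) c) < (1 - \<mu>) * r"
proof (rule ccontr)
  assume far: "\<not> ?thesis"
  have "0 < (1 - \<mu>) * r" using \<mu> \<open>0 < r\<close> by simp
  with far have "1 \<le> m" by (cases m) auto
  have "k * s \<le> k * (1 + \<mu>) * r"
    using mult_left_mono[OF s k_nonneg] by (simp add: mult.assoc)
  with shadow[OF \<open>1 \<le> m\<close>]
  have "\<forall>\<^sub>F j in sequentially. dist ((T ^^ m) c) ((T ^^ (j + m)) x) \<le> k * (1 + \<mu>) * r"
    by (elim eventually_mono) (simp add: funpow_funpow add.commute)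
  then have "\<forall>\<^sub>F i in sequentially. dist ((T ^^ m) c) ((T ^^ i) x) \<le> k * (1 + \<mu>) * r"
    using eventually_sequentially_seg[of "\<lambda>i. dist ((T ^^ m) c) ((T ^^ i) x) \<le> k * (1 + \<mu>) * r" m]
    by simp
  moreover have "\<forall>\<^sub>F i in sequentially. dist c ((T ^^ i) x) \<le> (1 + \<mu>) * r"
    using near s by (auto elim: eventually_mono)
  ultimately have "r \<le> \<alpha> * r"
    unfolding r_def using far \<open>0 < r\<close> by (intro asymptotic_radius_le_regular) (simp_all add: r_def)
  then show False using \<open>0 < r\<close> \<alpha> by simp
qed

lemma asymptotic_radius_orbit_le:
  assumes R: "\<forall>n. dist x ((T ^^ n) x) \<le> R"
  shows "(1 + \<mu>) * asymptotic_radius (\<lambda>i. (T ^^ i) x) \<le> R"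
proof (rule ccontr)
  define r where "r = asymptotic_radius (\<lambda>i. (T ^^ i) x)"
  assume "\<not> (1 + \<mu>) * asymptotic_radius (\<lambda>i. (T ^^ i) x) \<le> R"
  then have Rr: "R < (1 + \<mu>) * r" by (simp add: r_def)
  moreover have "0 \<le> R" using R[rule_format, of 0] by simp
  ultimately have "0 < (1 + \<mu>) * r" by linarith
  then have "0 < r" using \<mu> by (simp add: zero_less_mult_iff)
  have "dist x ((T ^^ m) x) < (1 - \<mu>) * r" for m
    unfolding r_def
  proof (rule displacement_less_asymptotic_radius[where s = R])
    show "\<forall>\<^sub>F i in sequentially. dist x ((T ^^ i) x) \<le> R" using R by (simp add: always_eventually)
    show "\<forall>\<^sub>F j in sequentially. dist ((T ^^ n) x) ((T ^^ n) ((T ^^ j) x)) \<le> k * R" if "1 \<le> n" for n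
      using dist_funpow_funpow_le[OF that] R by (simp add: always_eventually)
  qed (use Rr \<open>0 < r\<close> in \<open>simp_all add: r_def\<close>)
  then have "r \<le> (1 - \<mu>) * r"
    unfolding r_def by (intro asymptotic_radius_le[of x] always_eventually allI less_imp_le)
  then show False using \<open>0 < r\<close> \<mu> by simp
qed

lemma eventually_dist_funpow_le:
  assumes near: "\<forall>\<^sub>F i in sequentially. dist z ((T ^^ i) x) \<le> s"
    and "s \<le> dist z ((T ^^ m) z)" "1 \<le> n"
  shows "\<forall>\<^sub>F j in sequentially. dist ((T ^^ n) z) ((T ^^ n) ((T ^^ j) x)) \<le> k * s"
proof -
  obtain N where N: "\<forall>i\<ge>N. dist z ((T ^^ i) x) \<le> s" using near unfolding eventually_sequentially ..
  have "dist ((T ^^ n) z) ((T ^^ n) ((T ^^ j) x)) \<le> k * s" if "N \<le> j" for j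
    by (rule dist_funpow_le_of_le_displacement[OF assms(3) _ assms(2)])
      (use N that in \<open>auto simp: funpow_funpow\<close>)
  then show ?thesis unfolding eventually_sequentially by blast
qed

lemma displacement_le_near_asymptotic_center:
  fixes x z :: 'a
  defines "r \<equiv> asymptotic_radius (\<lambda>i. (T ^^ i) x)"
  assumes "0 < r" "r \<le> s" "s \<le> (1 + \<mu>) * r"
    and near: "\<forall>\<^sub>F i in sequentially. dist z ((T ^^ i) x) \<le> s"
  shows "dist z ((T ^^ n) z) \<le> s"
proof (cases "\<forall>m. dist z ((T ^^ m) z) \<le> s")
  case False
  then obtain m where "s \<le> dist z ((T ^^ m) z)" by (auto simp: not_le intro: less_imp_le)
  then have "dist z ((T ^^ n) z) < (1 - \<mu>) * r"
    unfolding r_def using assms(2-4)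
    by (intro displacement_less_asymptotic_radius[OF _ _ near] eventually_dist_funpow_le[OF near])
      (simp_all add: r_def)
  also have "\<dots> \<le> r" using \<open>0 < r\<close> \<mu> by simp
  also have "\<dots> \<le> s" by fact
  finally show ?thesis by simp
qed simp

lemma displacement_le_near_orbit:
  assumes near: "\<forall>\<^sub>F i in sequentially. dist z ((T ^^ i) x) \<le> s"
  shows "dist z ((T ^^ n) z) \<le> (1 + k) * s"
proof -
  have "0 \<le> s" using near by (rule eventually_dist_le_imp_nonneg)
  then have "s \<le> (1 + k) * s" using k_nonneg by (simp add: algebra_simps)
  show ?thesis
  proof (cases "1 \<le> n \<and> \<not> (\<forall>m. dist z ((T ^^ m) z) \<le> s)")
    case True
    then obtain m where "s \<le> dist z ((T ^^ m) z)" by (auto simp: not_le intro: less_imp_le)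
    with True have "\<forall>\<^sub>F j in sequentially. dist ((T ^^ n) z) ((T ^^ n) ((T ^^ j) x)) \<le> k * s"
      by (intro eventually_dist_funpow_le[OF near]) auto
    moreover have "\<forall>\<^sub>F j in sequentially. dist z ((T ^^ (j + n)) x) \<le> s"
      using near eventually_sequentially_seg[of "\<lambda>i. dist z ((T ^^ i) x) \<le> s" n] by simp
    ultimately have "\<forall>\<^sub>F j in sequentially.
        dist ((T ^^ n) z) ((T ^^ (j + n)) x) \<le> k * s \<and> dist z ((T ^^ (j + n)) x) \<le> s"
      by eventually_elim (simp add: funpow_funpow add.commute)
    then obtain N where "\<forall>j\<ge>N.
        dist ((T ^^ n) z) ((T ^^ (j + n)) x) \<le> k * s \<and> dist z ((T ^^ (j + n)) x) \<le> s"
      unfolding eventually_sequentially ..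
    then have "dist ((T ^^ n) z) ((T ^^ (N + n)) x) \<le> k * s" "dist z ((T ^^ (N + n)) x) \<le> s"
      by simp_all
    then show ?thesis using dist_triangle2[of z "(T ^^ n) z" "(T ^^ (N + n)) x"]
      by (simp add: algebra_simps)
  next
    case False
    then have "n = 0 \<or> dist z ((T ^^ n) z) \<le> s" by auto
    then show ?thesis using \<open>0 \<le> s\<close> \<open>s \<le> (1 + k) * s\<close> by auto
  qed
qed

definition rate :: real where
  "rate = (2 + \<mu>) / (2 + 2 * \<mu>)"

lemma rate_pos: "0 < rate"
  using \<mu> by (simp add: rate_def)

lemma rate_less_one: "rate < 1"
  using \<mu> by (simp add: rate_def)

lemma displacement_improvement:
  assumes R: "\<forall>n. dist x ((T ^^ n) x) \<le> R" and "0 < R"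
  shows "\<exists>z. (\<forall>n. dist z ((T ^^ n) z) \<le> rate * R) \<and> dist x z \<le> 2 * R"
proof -
  define r where "r = asymptotic_radius (\<lambda>i. (T ^^ i) x)"
  \<comment> \<open>If \<open>r = 0\<close>, regularity gives nothing; then \<open>s\<close> is taken so small that \<open>(1 + k) s\<close> suffices.\<close>
  define s where "s = (if 0 < r then (1 + \<mu> / 2) * r else rate * R / (1 + k))"
  have rR: "(1 + \<mu>) * r \<le> R" unfolding r_def using R by (rule asymptotic_radius_orbit_le)
  have "rate * (1 + \<mu>) = 1 + \<mu> / 2" using \<mu> by (simp add: rate_def field_simps)
  then have s_pos: "s \<le> rate * ((1 + \<mu>) * r)" if "0 < r"
    using that by (simp add: s_def mult.assoc[symmetric])
  have "r < s"
  proof (cases "0 < r")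
    case False
    moreover have "0 < rate * R / (1 + k)" using rate_pos \<open>0 < R\<close> k_nonneg by simp
    ultimately show ?thesis by (simp add: s_def)
  qed (use \<mu> in \<open>simp add: s_def\<close>)
  have "s \<le> rate * R"
  proof (cases "0 < r")
    case True
    then show ?thesis using s_pos mult_left_mono[OF rR less_imp_le[OF rate_pos]] by linarith
  next
    case False
    then show ?thesis using k_nonneg rate_pos \<open>0 < R\<close> by (simp add: s_def field_simps)
  qed
  have "bounded (range (\<lambda>i. (T ^^ i) x))"
    by (rule bounded_subset[OF bounded_cball[of x R]]) (use R in auto)
  then obtain z where near: "\<forall>\<^sub>F i in sequentially. dist z ((T ^^ i) x) \<le> s"
    using \<open>r < s\<close> asymptotic_radius_less_imp_eventually_dist_le unfolding r_def by blast
  have "dist z ((T ^^ n) z) \<le> rate * R" for n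
  proof (cases "0 < r")
    case True
    moreover have "s \<le> (1 + \<mu>) * r" using True \<mu> by (simp add: s_def)
    ultimately have "dist z ((T ^^ n) z) \<le> s"
      using \<open>r < s\<close> near by (intro displacement_le_near_asymptotic_center) (simp_all add: r_def)
    then show ?thesis using \<open>s \<le> rate * R\<close> by linarith
  next
    case False
    then have "(1 + k) * s = rate * R" using k_nonneg by (simp add: s_def)
    then show ?thesis using displacement_le_near_orbit[OF near] by simp
  qed
  moreover have "dist x z \<le> 2 * R"
  proof -
    obtain N where "\<forall>i\<ge>N. dist z ((T ^^ i) x) \<le> s" using near unfolding eventually_sequentially ..
    then have "dist z ((T ^^ N) x) \<le> s" by simp
    then have "dist x z \<le> R + s" using R[rule_format, of N] dist_triangle2[of x z "(T ^^ N) x"] by linarith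
    moreover have "rate * R \<le> R" using rate_less_one \<open>0 < R\<close> by simp
    ultimately show ?thesis using \<open>s \<le> rate * R\<close> by linarith
  qed
  ultimately show ?thesis by blast
qed

lemma limit_is_fixed_point:
  assumes lim: "xs \<longlonglongrightarrow> p" and displ: "\<And>i n. dist (xs i) ((T ^^ n) (xs i)) \<le> \<epsilon> i"
    and "\<epsilon> \<longlonglongrightarrow> 0"
  shows "T p = p"
proof (rule ccontr)
  assume "T p \<noteq> p"
  define \<delta> where "\<delta> = dist p (T p)"
  have "0 < \<delta>" using \<open>T p \<noteq> p\<close> by (simp add: \<delta>_def)
  have "(\<lambda>i. dist p (xs i) + \<epsilon> i) \<longlonglongrightarrow> dist p p + 0"
    by (intro tendsto_intros lim \<open>\<epsilon> \<longlonglongrightarrow> 0\<close>)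
  then have "\<forall>\<^sub>F i in sequentially. dist p (xs i) + \<epsilon> i < \<delta> / (1 + k)"
    using \<open>0 < \<delta>\<close> k_nonneg by (intro order_tendstoD(2)) auto
  then obtain i where i: "dist p (xs i) + \<epsilon> i < \<delta> / (1 + k)" by (auto simp: eventually_sequentially)
  define s where "s = dist p (xs i) + \<epsilon> i"
  have "(1 + k) * s < \<delta>" using i k_nonneg by (simp add: s_def field_simps)
  have near: "\<forall>j. dist p ((T ^^ j) (xs i)) \<le> s"
  proof
    fix j
    show "dist p ((T ^^ j) (xs i)) \<le> s"
      using dist_triangle[of p "(T ^^ j) (xs i)" "xs i"] displ[of i j] by (simp add: s_def)
  qed
  have "0 \<le> s" using displ[of i 0] by (simp add: s_def add_nonneg_nonneg)
  then have "0 \<le> k * s" using k_nonneg by simp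
  then have "s \<le> \<delta>" using \<open>(1 + k) * s < \<delta>\<close> by (simp add: algebra_simps)
  then have "dist ((T ^^ 1) p) ((T ^^ 1) (xs i)) \<le> k * s"
    using near by (intro dist_funpow_le_of_le_displacement[of 1 _ _ _ 1]) (simp_all add: \<delta>_def)
  then have "\<delta> \<le> dist p (xs i) + dist (xs i) (T (xs i)) + k * s"
    using dist_triangle[of p "T p" "xs i"] dist_triangle[of "xs i" "T p" "T (xs i)"]
    by (simp add: \<delta>_def dist_commute)
  also have "\<dots> \<le> (1 + k) * s"
    using displ[of i 1] by (simp add: s_def algebra_simps)
  finally show False using \<open>(1 + k) * s < \<delta>\<close> by simp
qed

end

lemma bounded_orbit_imp_fixed_point:
  fixes T :: "'a::complete_space \<Rightarrow> 'a"
  assumes "lifschitz_regular_map T k \<mu> \<alpha>" "bounded (orbit T x0)"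
  shows "\<exists>x. T x = x"
proof -
  interpret lifschitz_regular_map T k \<mu> \<alpha> by fact
  obtain R0 where "0 < R0" "\<forall>n. dist x0 ((T ^^ n) x0) \<le> R0"
    using bounded_orbit_imp_displacement_le[OF assms(2)] by blast
  then obtain xs where xs: "\<And>i n. dist (xs i) ((T ^^ n) (xs i)) \<le> rate ^ i * R0"
    and "convergent xs"
    using convergent_by_geometric_improvement[where P = "\<lambda>x R. \<forall>n. dist x ((T ^^ n) x) \<le> R"]
      rate_pos rate_less_one displacement_improvement by blast
  then obtain p where "xs \<longlonglongrightarrow> p" by (auto simp: convergent_def)
  moreover have "(\<lambda>i. rate ^ i * R0) \<longlonglongrightarrow> 0"
    using rate_pos rate_less_one by (intro tendsto_mult_left_zero LIMSEQ_power_zero) simp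
  ultimately have "T p = p" by (rule limit_is_fixed_point[OF _ xs])
  then show ?thesis ..
qed

theorem corollary4p5:
  fixes T :: "'a::complete_space \<Rightarrow> 'a" and k :: real
  assumes "ereal k < lifschitz_char TYPE('a)"
    and "\<And>n x y. n \<ge> 1 \<Longrightarrow> Dsup x (orbit T y) \<le> Dsup x (orbit T x) \<Longrightarrow>
           ereal (dist ((T ^^ n) x) ((T ^^ n) y)) \<le> ereal k * Dsup x (orbit T y)"
    and "\<exists>x0. bounded (orbit T x0)"
  shows "\<exists>x. T x = x"
proof -
  obtain c where "1 \<le> c" "k < c" "balls_regular c TYPE('a)"
    using assms(1) by (rule less_lifschitz_charE)
  define k' where "k' = max k 0"
  have "k' < c" using \<open>k < c\<close> \<open>1 \<le> c\<close> by (simp add: k'_def)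
  with \<open>balls_regular c TYPE('a)\<close> obtain \<mu> \<alpha> where "0 < \<mu>" "\<mu> < 1" "0 < \<alpha>" "\<alpha> < 1"
    and regular: "\<And>(x::'a) y r. 0 < r \<Longrightarrow> (1 - \<mu>) * r \<le> dist x y \<Longrightarrow>
      \<exists>w. cball x ((1 + \<mu>) * r) \<inter> cball y (k' * (1 + \<mu>) * r) \<subseteq> cball w (\<alpha> * r)"
    by (rule balls_regularE) (rule that)
  have "lifschitz_regular_map T k' \<mu> \<alpha>"
  proof
    fix n :: nat and x y :: 'a
    assume "1 \<le> n" "Dsup x (orbit T y) \<le> Dsup x (orbit T x)"
    then have "ereal (dist ((T ^^ n) x) ((T ^^ n) y)) \<le> ereal k * Dsup x (orbit T y)" by (rule assms(2))
    also have "\<dots> \<le> ereal k' * Dsup x (orbit T y)"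
      by (rule ereal_mult_right_mono) (simp_all add: k'_def Dsup_orbit_nonneg)
    finally show "ereal (dist ((T ^^ n) x) ((T ^^ n) y)) \<le> ereal k' * Dsup x (orbit T y)" .
  qed (use regular \<open>0 < \<mu>\<close> \<open>\<mu> < 1\<close> \<open>0 < \<alpha>\<close> \<open>\<alpha> < 1\<close> in \<open>simp_all add: k'_def\<close>)
  then show ?thesis using assms(3) bounded_orbit_imp_fixed_point by blast
qed

end
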